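(* Let $1/q$ be a prime power, $\Bbbk=\mathbb{F}_{1/q}$, $\alpha=(\alpha_1,\dots,\alpha_k),\beta$ weak compositions of $n$, and $M\in\mathbb{N}^{k\times l}$ with row sums $\alpha$ and column sums $\beta$. Let $E\in\mathrm{Fl}_\alpha$ be the standard flag. Then the number of $F'\in\mathrm{Fl}_\beta$ such that $(E,F')$ has relative position $M$ is $$q^{-\sum_{1\le i'\le i\le k,\,1\le j<j'\le l}M_{i,j}M_{i',j'}}\frac{\prod_{i=1}^k[\alpha_i]_q!}{\prod_{i,j}[M_{i,j}]_q!}.$$
   Context: $\mathrm{Fl}_\alpha$ is the set of chains $0=F_0\subseteq\cdots\subseteq F_k=\Bbbk^n$ with $\dim F_i=\alpha_1+\cdots+\alpha_i$; $E_i=\langle e_1,\dots,e_{\alpha_1+\cdots+\alpha_i}\rangle$. For $F\in\mathrm{Fl}_\alpha$, $F'\in\mathrm{Fl}_\beta$, the relative position of $(F,F')$ is the unique $M\in\mathbb{N}^{k\times l}$ with $\dim(F_i\cap F'_j)=\sum_{i'\le i,j'\le j}M_{i',j'}$ for all $0\le i\le k$, $0\le j\le l$. $[m]_q!=\prod_{r=1}^m(1+q+\cdots+q^{r-1})$. Note the index set in the exponent allows $i'=i$. *)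

theory Defs
  imports Complex_Main "HOL-Library.Function_Algebras"
begin

text \<open>Vectors of \<open>k^n\<close> are functions \<open>nat \<Rightarrow> 'a\<close> vanishing at indices \<open>\<ge> n\<close>;
  coordinate \<open>j\<close> (0-based) corresponds to \<open>e_(j+1)\<close>.\<close>

definition fscale :: "'a::field \<Rightarrow> (nat \<Rightarrow> 'a) \<Rightarrow> (nat \<Rightarrow> 'a)" where
  "fscale c v = (\<lambda>i. c * v i)"

definition ambient :: "nat \<Rightarrow> (nat \<Rightarrow> 'a::field) set" where
  "ambient n = {v. \<forall>i\<ge>n. v i = 0}"

definition unitvec :: "nat \<Rightarrow> nat \<Rightarrow> 'a::field" where
  "unitvec j = (\<lambda>i. if i = j then 1 else 0)"

abbreviation fsubspace :: "(nat \<Rightarrow> 'a::field) set \<Rightarrow> bool" where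
  "fsubspace S \<equiv> module.subspace fscale S"

abbreviation fdim :: "(nat \<Rightarrow> 'a::field) set \<Rightarrow> nat" where
  "fdim S \<equiv> vector_space.dim fscale S"

definition Fl :: "nat \<Rightarrow> nat list \<Rightarrow> (nat \<Rightarrow> 'a::field) set list set" where
  "Fl n \<alpha> = {F. length F = Suc (length \<alpha>)
      \<and> (\<forall>i\<le>length \<alpha>. fsubspace (F ! i) \<and> F ! i \<subseteq> ambient n
             \<and> fdim (F ! i) = sum_list (take i \<alpha>))
      \<and> (\<forall>i<length \<alpha>. F ! i \<subseteq> F ! Suc i)}"

definition std_flag :: "nat list \<Rightarrow> (nat \<Rightarrow> 'a::field) set list" where
  "std_flag \<alpha> = map (\<lambda>i. module.span fscale (unitvec ` {..<sum_list (take i \<alpha>)}))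
                      [0..<Suc (length \<alpha>)]"

definition rel_pos :: "(nat \<Rightarrow> 'a::field) set list \<Rightarrow> (nat \<Rightarrow> 'a) set list
     \<Rightarrow> (nat \<Rightarrow> nat \<Rightarrow> nat) \<Rightarrow> bool" where
  "rel_pos F F' M \<longleftrightarrow> (\<forall>i<length F. \<forall>j<length F'.
      fdim (F ! i \<inter> F' ! j) = (\<Sum>i'\<in>{1..i}. \<Sum>j'\<in>{1..j}. M i' j'))"

definition qfact :: "real \<Rightarrow> nat \<Rightarrow> real" where
  "qfact q m = (\<Prod>r\<in>{1..m}. \<Sum>t<r. q ^ t)"

end

theory Submission
  imports Defs "HOL-Library.FuncSet" "HOL-Library.Cardinality"
begin

text \<open>Induction on \<open>n\<close>, splitting off the last coordinate. Let \<open>H = \<Bbbk>^n \<subseteq> \<Bbbk>^(n+1)\<close> and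
  let \<open>i\<^sub>0\<close> be the block of \<open>\<alpha>\<close> containing \<open>e_(n+1)\<close>. A flag \<open>F'\<close> in relative position
  \<open>M\<close> first leaves \<open>H\<close> at a step \<open>j\<^sub>0\<close> with \<open>M(i\<^sub>0,j\<^sub>0) > 0\<close>, and \<open>F' \<inter> H\<close> is a flag in
  \<open>\<Bbbk>^n\<close> in relative position \<open>M - E(i\<^sub>0,j\<^sub>0)\<close> to the standard flag. Conversely, the flags
  with given \<open>j\<^sub>0\<close> and \<open>F' \<inter> H = G\<close> are \<open>F'_j = G_j + \<Bbbk>v\<close> for \<open>j \<ge> j\<^sub>0\<close>, with \<open>v_(n+1) = 1\<close>
  determined modulo \<open>G_j\<^sub>0\<close>, so there are \<open>q^-(n+1 - dim F'_j\<^sub>0)\<close> of them. The closed formula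
  satisfies the resulting recurrence because the \<open>q\<close>-integers telescope:
  \<open>\<Sum>_j q^(M(i\<^sub>0,1)+\<dots>+M(i\<^sub>0,j-1)) [M(i\<^sub>0,j)]_q = [\<alpha>_i\<^sub>0]_q\<close>.\<close>

section \<open>Subspaces and flags over a finite field\<close>

interpretation vs: vector_space "fscale :: 'a::field \<Rightarrow> (nat \<Rightarrow> 'a) \<Rightarrow> _"
  by unfold_locales (auto simp: fscale_def fun_eq_iff algebra_simps)

lemma subspace_ambient: "fsubspace (ambient n :: (nat \<Rightarrow> 'a::field) set)"
  by (auto simp: vs.subspace_def ambient_def fscale_def)

lemma ambient_mono: "a \<le> b \<Longrightarrow> ambient a \<subseteq> ambient b"
  by (auto simp: ambient_def)

lemma ambient_Int: "ambient a \<inter> ambient b = ambient (min a b)"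
  by (auto simp: ambient_def min_def split: if_splits)

lemma ambient_0: "ambient 0 = {0}"
  by (auto simp: ambient_def)

lemma unitvec_in_ambient: "j < m \<Longrightarrow> unitvec j \<in> ambient m"
  by (auto simp: unitvec_def ambient_def)

lemma ambient_Suc_iff: "v \<in> ambient (Suc n) \<Longrightarrow> v \<in> ambient n \<longleftrightarrow> v n = 0"
  by (auto simp: ambient_def) (metis Suc_le_eq le_neq_implies_less)

lemma
  shows finite_ambient: "finite (ambient n :: (nat \<Rightarrow> 'a::{field,finite}) set)"
    and card_ambient: "card (ambient n :: (nat \<Rightarrow> 'a) set) = CARD('a) ^ n"
proof -
  have bij: "bij_betw (\<lambda>v. restrict v {..<n}) (ambient n :: (nat \<Rightarrow> 'a) set) (PiE {..<n} (\<lambda>_. UNIV))"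
  proof (rule bij_betwI')
    fix x y :: "nat \<Rightarrow> 'a" assume "x \<in> ambient n" "y \<in> ambient n"
    then show "(restrict x {..<n} = restrict y {..<n}) = (x = y)"
      by (auto simp: ambient_def fun_eq_iff restrict_def) (metis not_le)
  next
    fix x :: "nat \<Rightarrow> 'a" assume "x \<in> ambient n"
    then show "restrict x {..<n} \<in> PiE {..<n} (\<lambda>_. UNIV)" by auto
  next
    fix y :: "nat \<Rightarrow> 'a" assume "y \<in> PiE {..<n} (\<lambda>_. UNIV)"
    then show "\<exists>x\<in>ambient n. y = restrict x {..<n}"
      by (intro bexI[of _ "\<lambda>i. if i < n then y i else 0"])
        (auto simp: ambient_def PiE_def extensional_def restrict_def fun_eq_iff)
  qed
  have "finite (PiE {..<n} (\<lambda>_. UNIV :: 'a set))"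
    by (simp add: finite_PiE)
  then show "finite (ambient n :: (nat \<Rightarrow> 'a) set)"
    using bij bij_betw_finite by blast
  show "card (ambient n :: (nat \<Rightarrow> 'a) set) = CARD('a) ^ n"
    using bij_betw_same_card[OF bij] by (simp add: card_PiE)
qed

lemma finite_subset_ambient: "S \<subseteq> ambient n \<Longrightarrow> finite (S :: (nat \<Rightarrow> 'a::{field,finite}) set)"
  using finite_ambient finite_subset by blast

lemma fdim_zero [simp]: "fdim ({0} :: (nat \<Rightarrow> 'a::field) set) = 0"
  by (metis vs.span_empty vs.dim_span vs.dim_eq_card_independent vs.independent_empty card.empty)

lemma span_insert_eq_image:
  "vs.span (insert a B) = (\<lambda>(c, x). fscale c a + x) ` (UNIV \<times> vs.span B)"
proof -
  have "vs.span (insert a B) = {x. \<exists>c. x - fscale c a \<in> vs.span B}"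
    by (rule vs.span_insert)
  also have "\<dots> = (\<lambda>(c, x). fscale c a + x) ` (UNIV \<times> vs.span B)"
  proof (auto simp: image_iff)
    fix x c assume "x - fscale c a \<in> vs.span B"
    then show "\<exists>d. \<exists>y\<in>vs.span B. x = fscale d a + y"
      by (intro exI[of _ c] bexI[of _ "x - fscale c a"]) auto
  next
    fix c y assume "y \<in> vs.span B"
    then show "\<exists>d. fscale c a + y - fscale d a \<in> vs.span B"
      by (intro exI[of _ c]) auto
  qed
  finally show ?thesis .
qed

lemma inj_on_scale_plus_span:
  fixes a :: "nat \<Rightarrow> 'a::field"
  assumes a: "a \<notin> vs.span B"
  shows "inj_on (\<lambda>(c, x). fscale c a + x) (UNIV \<times> vs.span B)"
proof (rule inj_onI, clarsimp)
  fix c x d y assume x: "x \<in> vs.span B" and y: "y \<in> vs.span B"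
    and eq: "fscale c a + x = fscale d a + y"
  have "fscale (c - d) a = y - x"
    using eq by (simp add: fun_eq_iff algebra_simps fscale_def)
  then have "fscale (c - d) a \<in> vs.span B"
    using x y vs.span_diff by auto
  moreover have "c \<noteq> d \<Longrightarrow> fscale (inverse (c - d)) (fscale (c - d) a) = a"
    by (simp add: fscale_def fun_eq_iff)
  ultimately have "c = d"
    using a vs.span_scale by metis
  then show "c = d \<and> x = y" using eq by simp
qed

lemma card_span_independent:
  fixes B :: "(nat \<Rightarrow> 'a::{field,finite}) set"
  assumes "finite B" "vs.independent B"
  shows "finite (vs.span B) \<and> card (vs.span B) = CARD('a) ^ card B"
  using assms
proof (induction B rule: finite_induct)
  case (insert a B)
  have "vs.independent B" and a: "a \<notin> vs.span B"
    using insert.prems insert.hyps by (auto simp: vs.independent_insert)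
  with insert.IH have "finite (UNIV \<times> vs.span B :: ('a \<times> (nat \<Rightarrow> 'a)) set)"
    and "card (vs.span B) = CARD('a) ^ card B" by auto
  then show ?case
    using span_insert_eq_image[of a B] inj_on_scale_plus_span[OF a] insert.hyps
    by (simp add: card_image card_cartesian_product)
qed simp

lemma card_subspace:
  fixes S :: "(nat \<Rightarrow> 'a::{field,finite}) set"
  assumes "fsubspace S" "finite S"
  shows "card S = CARD('a) ^ fdim S"
proof -
  obtain B where B: "B \<subseteq> S" "vs.independent B" "S \<subseteq> vs.span B" "card B = fdim S"
    by (rule vs.basis_exists)
  have "vs.span B = S" using B assms vs.span_minimal[of B S] by auto
  moreover have "finite B" using B assms finite_subset by blast
  ultimately show ?thesis using card_span_independent[of B] B by auto
qed

lemma two_le_card_field: "2 \<le> CARD('a::{field,finite})"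
proof -
  have "card {0, 1::'a} \<le> CARD('a)" by (rule card_mono) auto
  then show ?thesis by simp
qed

lemma fdim_eq_iff_card:
  fixes S :: "(nat \<Rightarrow> 'a::{field,finite}) set"
  assumes "fsubspace S" "finite S"
  shows "fdim S = d \<longleftrightarrow> card S = CARD('a) ^ d"
  using card_subspace[OF assms] two_le_card_field[where 'a='a] power_inject_exp[of "CARD('a)"]
  by (metis less_le_trans one_less_numeral_iff semiring_norm(76))

lemma span_unitvec: "vs.span (unitvec ` {..<m}) = (ambient m :: (nat \<Rightarrow> 'a::field) set)"
proof
  show "vs.span (unitvec ` {..<m}) \<subseteq> (ambient m :: (nat \<Rightarrow> 'a) set)"
    by (rule vs.span_minimal) (auto simp: unitvec_in_ambient subspace_ambient)
  show "(ambient m :: (nat \<Rightarrow> 'a) set) \<subseteq> vs.span (unitvec ` {..<m})"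
  proof (induction m)
    case 0
    then show ?case by (simp add: ambient_0 vs.span_zero)
  next
    case (Suc m)
    show ?case
    proof
      fix v :: "nat \<Rightarrow> 'a" assume v: "v \<in> ambient (Suc m)"
      have "v - fscale (v m) (unitvec m) \<in> ambient m"
        using v by (auto simp: ambient_def fscale_def unitvec_def)
      then have "v - fscale (v m) (unitvec m) \<in> vs.span (unitvec ` {..<Suc m})"
        using Suc.IH vs.span_mono[of "unitvec ` {..<m}" "unitvec ` {..<Suc m}"]
        by (auto simp: image_mono)
      moreover have "fscale (v m) (unitvec m) \<in> vs.span (unitvec ` {..<Suc m})"
        by (intro vs.span_scale vs.span_base) auto
      ultimately show "v \<in> vs.span (unitvec ` {..<Suc m})"
        using vs.span_add by fastforce
    qed
  qed
qed

lemma length_std_flag [simp]: "length (std_flag \<alpha>) = Suc (length \<alpha>)"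
  by (simp add: std_flag_def)

lemma nth_std_flag: "i \<le> length \<alpha> \<Longrightarrow> std_flag \<alpha> ! i = ambient (sum_list (take i \<alpha>))"
  by (simp add: std_flag_def span_unitvec nth_append del: upt_Suc)

definition corner_sum :: "(nat \<Rightarrow> nat \<Rightarrow> nat) \<Rightarrow> nat \<Rightarrow> nat \<Rightarrow> nat" where
  "corner_sum M i j = (\<Sum>i'\<in>{1..i}. \<Sum>j'\<in>{1..j}. M i' j')"

lemma mem_Fl_iff_card:
  "F \<in> (Fl n \<beta> :: (nat \<Rightarrow> 'a::{field,finite}) set list set) \<longleftrightarrow>
     length F = Suc (length \<beta>)
     \<and> (\<forall>j\<le>length \<beta>. fsubspace (F ! j) \<and> F ! j \<subseteq> ambient n
          \<and> card (F ! j) = CARD('a) ^ sum_list (take j \<beta>))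
     \<and> (\<forall>j<length \<beta>. F ! j \<subseteq> F ! Suc j)"
  unfolding Fl_def using fdim_eq_iff_card finite_subset_ambient by (auto, blast+)

lemma rel_pos_std_flag_iff_card:
  fixes F :: "(nat \<Rightarrow> 'a::{field,finite}) set list"
  assumes "F \<in> Fl n \<beta>"
  shows "rel_pos (std_flag \<alpha>) F M \<longleftrightarrow>
    (\<forall>i\<le>length \<alpha>. \<forall>j\<le>length \<beta>.
        card (ambient (sum_list (take i \<alpha>)) \<inter> F ! j) = CARD('a) ^ corner_sum M i j)"
proof -
  have len: "length F = Suc (length \<beta>)"
    and F: "\<And>j. j \<le> length \<beta> \<Longrightarrow> fsubspace (F ! j) \<and> F ! j \<subseteq> ambient n"
    using assms by (auto simp: mem_Fl_iff_card)
  have "fdim (ambient (sum_list (take i \<alpha>)) \<inter> F ! j) = corner_sum M i j \<longleftrightarrow>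
     card (ambient (sum_list (take i \<alpha>)) \<inter> F ! j) = CARD('a) ^ corner_sum M i j"
    if "j \<le> length \<beta>" for i j
    using F[OF that] subspace_ambient finite_subset_ambient
    by (intro fdim_eq_iff_card) (auto intro: vs.subspace_inter)
  then show ?thesis
    unfolding rel_pos_def corner_sum_def using len by (auto simp: nth_std_flag less_Suc_eq_le)
qed

lemma Fl_rel_pos_iff_card:
  "F \<in> {F \<in> (Fl n \<beta> :: (nat \<Rightarrow> 'a::{field,finite}) set list set). rel_pos (std_flag \<alpha>) F M}
   \<longleftrightarrow> length F = Suc (length \<beta>)
     \<and> (\<forall>j\<le>length \<beta>. fsubspace (F ! j) \<and> F ! j \<subseteq> ambient n
          \<and> card (F ! j) = CARD('a) ^ sum_list (take j \<beta>))
     \<and> (\<forall>j<length \<beta>. F ! j \<subseteq> F ! Suc j)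
     \<and> (\<forall>i\<le>length \<alpha>. \<forall>j\<le>length \<beta>.
          card (ambient (sum_list (take i \<alpha>)) \<inter> F ! j) = CARD('a) ^ corner_sum M i j)"
  using rel_pos_std_flag_iff_card[of F n \<beta> \<alpha> M] mem_Fl_iff_card[of F n \<beta>] by blast

lemma finite_Fl: "finite (Fl n \<beta> :: (nat \<Rightarrow> 'a::{field,finite}) set list set)"
proof (rule finite_subset)
  show "Fl n \<beta> \<subseteq> {F. set F \<subseteq> Pow (ambient n :: (nat \<Rightarrow> 'a) set) \<and> length F = Suc (length \<beta>)}"
    by (force simp: mem_Fl_iff_card in_set_conv_nth less_Suc_eq_le)
  show "finite {F. set F \<subseteq> Pow (ambient n :: (nat \<Rightarrow> 'a) set) \<and> length F = Suc (length \<beta>)}"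
    by (intro finite_lists_length_eq) (simp add: finite_ambient)
qed

lemma chain_nth_mono:
  assumes "\<forall>j<l. F ! j \<subseteq> F ! Suc j" "i \<le> j" "j \<le> l"
  shows "F ! i \<subseteq> F ! j"
  using assms(2,3)
proof (induction j)
  case (Suc j)
  show ?case
  proof (cases "i = Suc j")
    case False
    then have "F ! i \<subseteq> F ! j" using Suc by simp
    also have "\<dots> \<subseteq> F ! Suc j" using assms(1) Suc.prems by simp
    finally show ?thesis .
  qed simp
qed simp

lemma card_eq_sum_card_fibres:
  assumes "finite A" "f ` A \<subseteq> B" "finite B"
  shows "card A = (\<Sum>y\<in>B. card {x\<in>A. f x = y})"
proof -
  have "A = (\<Union>y\<in>B. {x\<in>A. f x = y})" using assms by auto
  then have "card A = card (\<Union>y\<in>B. {x\<in>A. f x = y})" by simp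
  also have "\<dots> = (\<Sum>y\<in>B. card {x\<in>A. f x = y})"
    by (rule card_UN_disjoint) (use assms in auto)
  finally show ?thesis .
qed

lemma card_eq_card_image_mult:
  assumes "finite A" "\<And>y. y \<in> f ` A \<Longrightarrow> card {x\<in>A. f x = y} = c"
  shows "card A = card (f ` A) * c"
  using card_eq_sum_card_fibres[OF assms(1), of f "f ` A"] assms by simp

lemma card_subspace_sum:
  fixes P R :: "(nat \<Rightarrow> 'a::field) set"
  assumes "fsubspace P" "fsubspace R" "finite P" "finite R"
  shows "card P * card R = card ((\<lambda>(p, r). p + r) ` (P \<times> R)) * card (P \<inter> R)"
proof -
  have "card (P \<times> R) = card ((\<lambda>(p, r). p + r) ` (P \<times> R)) * card (P \<inter> R)"
  proof (rule card_eq_card_image_mult)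
    fix y assume "y \<in> (\<lambda>(p, r). p + r) ` (P \<times> R)"
    then obtain p0 r0 where pr: "p0 \<in> P" "r0 \<in> R" "y = p0 + r0" by auto
    have "{x \<in> P \<times> R. (\<lambda>(p, r). p + r) x = y} = (\<lambda>t. (p0 + t, r0 - t)) ` (P \<inter> R)"
    proof (intro set_eqI iffI)
      fix x assume "x \<in> {x \<in> P \<times> R. (\<lambda>(p, r). p + r) x = y}"
      then obtain p r where x: "x = (p, r)" "p \<in> P" "r \<in> R" "y = p + r" by auto
      have "p - p0 = r0 - r" using x pr by (simp add: algebra_simps)
      moreover have "p - p0 \<in> P" "r0 - r \<in> R"
        using pr x assms by (auto intro: vs.subspace_diff)
      ultimately have "p - p0 \<in> P \<inter> R" by simp
      then show "x \<in> (\<lambda>t. (p0 + t, r0 - t)) ` (P \<inter> R)"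
        using x pr by (intro image_eqI[of _ _ "p - p0"]) (auto simp: algebra_simps)
    next
      fix x assume "x \<in> (\<lambda>t. (p0 + t, r0 - t)) ` (P \<inter> R)"
      then show "x \<in> {x \<in> P \<times> R. (\<lambda>(p, r). p + r) x = y}"
        using pr assms by (auto intro: vs.subspace_add vs.subspace_diff)
    qed
    moreover have "inj_on (\<lambda>t. (p0 + t, r0 - t)) (P \<inter> R)" by (auto intro: inj_onI)
    ultimately show "card {x \<in> P \<times> R. (\<lambda>(p, r). p + r) x = y} = card (P \<inter> R)"
      by (simp add: card_image)
  qed (use assms in simp)
  then show ?thesis by (simp add: card_cartesian_product)
qed

section \<open>Extending a subspace of a hyperplane by a line\<close>

definition line_ext :: "(nat \<Rightarrow> 'a::field) set \<Rightarrow> (nat \<Rightarrow> 'a) \<Rightarrow> (nat \<Rightarrow> 'a) set" where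
  "line_ext G v = (\<lambda>(c, g). g + fscale c v) ` (UNIV \<times> G)"

lemma mem_line_ext: "x \<in> line_ext G v \<longleftrightarrow> (\<exists>c. \<exists>g\<in>G. x = g + fscale c v)"
  by (auto simp: line_ext_def)

lemma line_ext_mono: "G \<subseteq> G' \<Longrightarrow> line_ext G v \<subseteq> line_ext G' v"
  by (auto simp: line_ext_def)

lemma subset_line_ext: "fsubspace G \<Longrightarrow> G \<subseteq> line_ext G v"
  by (auto simp: mem_line_ext intro!: exI[of _ 0])

lemma vector_in_line_ext: "fsubspace G \<Longrightarrow> v \<in> line_ext G v"
  by (auto simp: mem_line_ext intro!: exI[of _ 1] bexI[of _ 0] vs.subspace_0)

lemma subspace_line_ext:
  assumes G: "fsubspace G"
  shows "fsubspace (line_ext G v)"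
  unfolding vs.subspace_def
proof (intro conjI ballI allI)
  show "0 \<in> line_ext G v"
    using vector_in_line_ext[OF G] subset_line_ext[OF G] vs.subspace_0[OF G] by blast
next
  fix x y assume "x \<in> line_ext G v" "y \<in> line_ext G v"
  then obtain c d g h where gh: "g \<in> G" "h \<in> G" "x = g + fscale c v" "y = h + fscale d v"
    by (auto simp: mem_line_ext)
  then have "x + y = (g + h) + fscale (c + d) v"
    by (simp add: fscale_def fun_eq_iff algebra_simps)
  then show "x + y \<in> line_ext G v"
    unfolding mem_line_ext using gh(1,2) vs.subspace_add[OF G] by blast
next
  fix a x assume "x \<in> line_ext G v"
  then obtain c g where g: "g \<in> G" "x = g + fscale c v" by (auto simp: mem_line_ext)
  then have "fscale a x = fscale a g + fscale (a * c) v"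
    by (simp add: fscale_def fun_eq_iff algebra_simps)
  then show "fscale a x \<in> line_ext G v"
    unfolding mem_line_ext using g(1) vs.subspace_scale[OF G] by blast
qed

lemma line_ext_subset_ambient:
  "G \<subseteq> ambient m \<Longrightarrow> v \<in> ambient m \<Longrightarrow> line_ext G v \<subseteq> ambient m"
  by (auto simp: mem_line_ext ambient_def fscale_def subset_iff)

lemma line_ext_coeff_unique:
  assumes "G \<subseteq> ambient n" "v n = 1" "g \<in> G" "h \<in> G" "g + fscale c v = h + fscale d v"
  shows "c = d \<and> g = h"
proof -
  have "g n = 0" "h n = 0" using assms by (auto simp: ambient_def)
  then have "c = d" using fun_cong[OF assms(5), of n] assms(2) by (simp add: fscale_def)
  then show ?thesis using assms(5) by simp
qed

lemma card_line_ext: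
  fixes G :: "(nat \<Rightarrow> 'a::{field,finite}) set"
  assumes "G \<subseteq> ambient n" "v n = 1"
  shows "card (line_ext G v) = CARD('a) * card G"
proof -
  have "inj_on (\<lambda>(c, g). g + fscale c v) (UNIV \<times> G)"
    by (rule inj_onI) (use line_ext_coeff_unique[of G n v] assms in auto)
  moreover have "finite G" using assms finite_subset_ambient by blast
  ultimately show ?thesis
    unfolding line_ext_def by (simp add: card_image card_cartesian_product)
qed

lemma line_ext_Int_ambient:
  assumes "G \<subseteq> ambient n" "v n = 1" "fsubspace G"
  shows "line_ext G v \<inter> ambient n = G"
proof
  show "G \<subseteq> line_ext G v \<inter> ambient n"
    using assms subset_line_ext by blast
  show "line_ext G v \<inter> ambient n \<subseteq> G"
  proof
    fix x assume x: "x \<in> line_ext G v \<inter> ambient n"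
    then obtain c g where g: "g \<in> G" "x = g + fscale c v" by (auto simp: mem_line_ext)
    have "g n = 0" "x n = 0" using g x assms by (auto simp: ambient_def)
    then have "c = 0" using g assms by (simp add: fscale_def)
    then show "x \<in> G" using g by simp
  qed
qed

lemma line_ext_translate:
  assumes "fsubspace G" "g \<in> G"
  shows "line_ext G (v + g) = line_ext G v"
proof (intro set_eqI iffI)
  fix x assume "x \<in> line_ext G (v + g)"
  then obtain c h where h: "h \<in> G" "x = h + fscale c (v + g)" by (auto simp: mem_line_ext)
  have "h + fscale c g \<in> G"
    using assms h by (intro vs.subspace_add vs.subspace_scale) auto
  moreover have "x = (h + fscale c g) + fscale c v"
    using h by (simp add: fscale_def fun_eq_iff algebra_simps)
  ultimately show "x \<in> line_ext G v"
    unfolding mem_line_ext by blast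
next
  fix x assume "x \<in> line_ext G v"
  then obtain c h where h: "h \<in> G" "x = h + fscale c v" by (auto simp: mem_line_ext)
  have "h - fscale c g \<in> G"
    using assms h by (intro vs.subspace_diff vs.subspace_scale) auto
  moreover have "x = (h - fscale c g) + fscale c (v + g)"
    using h by (simp add: fscale_def fun_eq_iff algebra_simps)
  ultimately show "x \<in> line_ext G (v + g)"
    unfolding mem_line_ext by blast
qed

lemma subspace_obtain_last_coord_one:
  fixes S :: "(nat \<Rightarrow> 'a::field) set"
  assumes "fsubspace S" "S \<subseteq> ambient (Suc n)" "\<not> S \<subseteq> ambient n"
  obtains v where "v \<in> S" "v n = 1"
proof -
  obtain u where u: "u \<in> S" "u \<notin> ambient n" using assms by auto
  then have "u n \<noteq> 0" using assms ambient_Suc_iff by blast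
  moreover have "fscale (inverse (u n)) u \<in> S" by (rule vs.subspace_scale[OF assms(1) u(1)])
  ultimately show ?thesis
    by (intro that[of "fscale (inverse (u n)) u"]) (auto simp: fscale_def)
qed

lemma subspace_eq_line_ext:
  fixes S :: "(nat \<Rightarrow> 'a::field) set"
  assumes S: "fsubspace S" "S \<subseteq> ambient (Suc n)" and v: "v \<in> S" "v n = 1"
  shows "S = line_ext (S \<inter> ambient n) v"
proof
  show "line_ext (S \<inter> ambient n) v \<subseteq> S"
    using v by (auto simp: mem_line_ext intro!: vs.subspace_add[OF S(1)] vs.subspace_scale[OF S(1)])
  show "S \<subseteq> line_ext (S \<inter> ambient n) v"
  proof
    fix x assume x: "x \<in> S"
    have "x - fscale (x n) v \<in> S"
      using x S v by (intro vs.subspace_diff vs.subspace_scale) auto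
    moreover have "x - fscale (x n) v \<in> ambient (Suc n)"
      using x S v subspace_ambient[of "Suc n"]
      by (auto intro!: vs.subspace_diff vs.subspace_scale)
    moreover have "(x - fscale (x n) v) n = 0"
      using v by (simp add: fscale_def)
    ultimately have "x - fscale (x n) v \<in> S \<inter> ambient n"
      using ambient_Suc_iff by blast
    then show "x \<in> line_ext (S \<inter> ambient n) v"
      unfolding mem_line_ext by (intro exI[of _ "x n"] bexI[of _ "x - fscale (x n) v"]) auto
  qed
qed

lemma card_subspace_not_in_hyperplane:
  fixes S :: "(nat \<Rightarrow> 'a::{field,finite}) set"
  assumes "fsubspace S" "S \<subseteq> ambient (Suc n)" "\<not> S \<subseteq> ambient n"
  shows "card S = CARD('a) * card (S \<inter> ambient n)"
proof -
  obtain v where v: "v \<in> S" "v n = 1"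
    using subspace_obtain_last_coord_one[OF assms] by blast
  then have "card S = card (line_ext (S \<inter> ambient n) v)"
    using subspace_eq_line_ext[OF assms(1,2) v] by simp
  also have "\<dots> = CARD('a) * card (S \<inter> ambient n)"
    using v by (intro card_line_ext) auto
  finally show ?thesis .
qed

lemma card_Int_mult_less:
  fixes A X Y H :: "(nat \<Rightarrow> 'a::{field,finite}) set"
  assumes subspaces: "fsubspace A" "fsubspace X" "fsubspace Y" "fsubspace H"
    and "finite Y" "X \<subseteq> Y" "A \<subseteq> H" "X \<subseteq> H" "\<not> Y \<subseteq> H"
  shows "card (A \<inter> Y) * card X < card Y * card (A \<inter> X)"
proof -
  let ?sum = "(\<lambda>(p, r). p + r) ` ((A \<inter> Y) \<times> X)"
  have fin: "finite X" "finite (A \<inter> Y)" using assms finite_subset by blast+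
  have "card (A \<inter> Y) * card X = card ?sum * card (A \<inter> Y \<inter> X)"
    using subspaces fin by (intro card_subspace_sum) (auto intro: vs.subspace_inter)
  also have "A \<inter> Y \<inter> X = A \<inter> X" using assms by auto
  finally have eq: "card (A \<inter> Y) * card X = card ?sum * card (A \<inter> X)" .
  have "?sum \<subseteq> Y \<inter> H"
    using assms by (auto intro: vs.subspace_add)
  also have "\<dots> \<subset> Y" using assms by auto
  finally have "card ?sum < card Y" using \<open>finite Y\<close> psubset_card_mono by blast
  moreover have "0 < card (A \<inter> X)"
    using fin subspaces by (auto simp: card_gt_0_iff intro: vs.subspace_0)
  ultimately show ?thesis unfolding eq by simp
qed

section \<open>Corner sums\<close>

lemma sum_list_take_eq_sum_nth:
  "j \<le> length xs \<Longrightarrow> sum_list (take j xs) = (\<Sum>i\<in>{1..j}. xs ! (i - 1))"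
proof (induction j)
  case (Suc j)
  then have "take (Suc j) xs = take j xs @ [xs ! j]" by (simp add: take_Suc_conv_app_nth)
  then show ?case using Suc by (simp add: sum.atLeast1_atMost_eq)
qed simp

lemma sum_list_take_le: "sum_list (take j xs) \<le> sum_list (xs :: nat list)"
  by (metis append_take_drop_id le_add1 sum_list_append)

lemma sum_decrement:
  fixes f :: "'b \<Rightarrow> nat"
  assumes "finite A" "1 \<le> f a"
  shows "(\<Sum>x\<in>A. if x = a then f x - 1 else f x) + (if a \<in> A then 1 else 0) = sum f A"
proof (cases "a \<in> A")
  case True
  then show ?thesis
    using assms by (simp add: sum.remove[of A a] sum.remove[of A a f] cong: if_cong)
qed (auto intro: sum.cong)

lemma sum_list_take_decrement:
  fixes xs :: "nat list"
  assumes "p < length xs" "1 \<le> xs ! p" "i \<le> length xs"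
  shows "sum_list (take i (xs[p := xs ! p - 1])) + (if p < i then 1 else 0) = sum_list (take i xs)"
proof -
  have "sum_list (take i (xs[p := xs ! p - 1]))
      = (\<Sum>x\<in>{1..i}. if x = Suc p then xs ! (x - 1) - 1 else xs ! (x - 1))"
    using assms by (auto simp: sum_list_take_eq_sum_nth nth_list_update intro: sum.cong)
  moreover have "(if p < i then 1 else 0) = (if Suc p \<in> {1..i} then 1 else (0::nat))"
    by auto
  ultimately show ?thesis
    using sum_decrement[of "{1..i}" "\<lambda>x. xs ! (x - 1)" "Suc p"] assms
    by (simp add: sum_list_take_eq_sum_nth)
qed

lemma corner_sum_rectangle:
  assumes "1 \<le> i" "1 \<le> j"
  shows "corner_sum M i j + corner_sum M (i - 1) (j - 1)
       = corner_sum M i (j - 1) + corner_sum M (i - 1) j + M i j"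
proof -
  obtain a b where ab: "i = Suc a" "j = Suc b" using assms by (metis Suc_pred' less_eq_Suc_le One_nat_def)
  have "corner_sum M (Suc a) c = corner_sum M a c + (\<Sum>j'\<in>{1..c}. M (Suc a) j')" for c
    by (simp add: corner_sum_def)
  moreover have "corner_sum M c (Suc b) = corner_sum M c b + (\<Sum>i'\<in>{1..c}. M i' (Suc b))" for c
    by (simp add: corner_sum_def sum.distrib)
  ultimately show ?thesis unfolding ab by simp
qed

lemma corner_sum_decrement:
  assumes "1 \<le> M a b" "1 \<le> a" "1 \<le> b"
  shows "corner_sum (\<lambda>i j. if i = a \<and> j = b then M i j - 1 else M i j) i j
       + (if a \<le> i \<and> b \<le> j then 1 else 0) = corner_sum M i j"
proof -
  let ?M = "\<lambda>i j. if i = a \<and> j = b then M i j - 1 else M i j"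
  have row: "(\<Sum>j'\<in>{1..j}. ?M i' j') + (if i' = a \<and> b \<le> j then 1 else 0) = (\<Sum>j'\<in>{1..j}. M i' j')"
    for i'
    using sum_decrement[of "{1..j}" "M a" b] assms by (cases "i' = a") (simp_all cong: if_cong)
  have "(\<Sum>i'\<in>{1..i}. if i' = a \<and> b \<le> j then 1 else 0) = (if a \<le> i \<and> b \<le> j then 1 else (0::nat))"
    using assms by auto
  then have "corner_sum ?M i j + (if a \<le> i \<and> b \<le> j then 1 else 0)
      = (\<Sum>i'\<in>{1..i}. (\<Sum>j'\<in>{1..j}. ?M i' j') + (if i' = a \<and> b \<le> j then 1 else 0))"
    by (simp add: corner_sum_def sum.distrib)
  also have "\<dots> = corner_sum M i j" unfolding corner_sum_def using row by simp
  finally show ?thesis .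
qed

lemma corner_sum_eq_column_sums:
  assumes cols: "\<forall>j\<in>{1..length \<beta>}. (\<Sum>i\<in>{1..k}. M i j) = \<beta> ! (j - 1)"
    and zero: "\<forall>i\<in>{r<..k}. \<forall>j\<in>{1..length \<beta>}. M i j = 0"
    and "r \<le> i" "i \<le> k" "j \<le> length \<beta>"
  shows "corner_sum M i j = sum_list (take j \<beta>)"
proof -
  have "corner_sum M i j = (\<Sum>j'\<in>{1..j}. \<Sum>i'\<in>{1..i}. M i' j')"
    unfolding corner_sum_def by (rule sum.swap)
  also have "\<dots> = (\<Sum>j'\<in>{1..j}. \<Sum>i'\<in>{1..k}. M i' j')"
  proof (rule sum.cong[OF refl])
    fix j' assume j': "j' \<in> {1..j}"
    have "(\<Sum>i'\<in>{1..k}. M i' j') = (\<Sum>i'\<in>{1..i} \<union> {i<..k}. M i' j')"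
      using assms by (intro sum.cong) auto
    also have "\<dots> = (\<Sum>i'\<in>{1..i}. M i' j') + (\<Sum>i'\<in>{i<..k}. M i' j')"
      by (rule sum.union_disjoint) auto
    finally have "(\<Sum>i'\<in>{1..k}. M i' j') = (\<Sum>i'\<in>{1..i}. M i' j') + (\<Sum>i'\<in>{i<..k}. M i' j')" .
    moreover have "(\<Sum>i'\<in>{i<..k}. M i' j') = 0" using zero j' assms by auto
    ultimately show "(\<Sum>i'\<in>{1..i}. M i' j') = (\<Sum>i'\<in>{1..k}. M i' j')" by simp
  qed
  also have "\<dots> = (\<Sum>j'\<in>{1..j}. \<beta> ! (j' - 1))" using cols assms by (intro sum.cong) auto
  also have "\<dots> = sum_list (take j \<beta>)" using assms by (simp add: sum_list_take_eq_sum_nth)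
  finally show ?thesis .
qed

section \<open>The exponent and the \<open>q\<close>-factorials\<close>

definition pos_exponent :: "nat \<Rightarrow> nat \<Rightarrow> (nat \<Rightarrow> nat \<Rightarrow> nat) \<Rightarrow> nat" where
  "pos_exponent k l M = (\<Sum>(i, j, i', j') \<in> {(i, j, i', j').
              1 \<le> i' \<and> i' \<le> i \<and> i \<le> k \<and> 1 \<le> j \<and> j < j' \<and> j' \<le> l}. M i j * M i' j')"

definition upper_right_sum :: "nat \<Rightarrow> (nat \<Rightarrow> nat \<Rightarrow> nat) \<Rightarrow> nat \<Rightarrow> nat \<Rightarrow> nat" where
  "upper_right_sum l M i j = (\<Sum>i'\<in>{1..i}. \<Sum>j'\<in>{j<..l}. M i' j')"

lemma pos_exponent_eq_sum:
  "pos_exponent k l M = (\<Sum>i\<in>{1..k}. \<Sum>j\<in>{1..l}. M i j * upper_right_sum l M i j)"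
proof -
  have "{(i, j, i', j'). 1 \<le> i' \<and> i' \<le> i \<and> i \<le> k \<and> 1 \<le> j \<and> j < j' \<and> j' \<le> l}
     = Sigma {1..k} (\<lambda>i. Sigma {1..l} (\<lambda>j. Sigma {1..i} (\<lambda>i'. {j<..l})))" by auto
  then have "pos_exponent k l M
      = (\<Sum>i\<in>{1..k}. \<Sum>j\<in>{1..l}. \<Sum>i'\<in>{1..i}. \<Sum>j'\<in>{j<..l}. M i j * M i' j')"
    by (simp add: pos_exponent_def sum.Sigma split_def)
  then show ?thesis by (simp add: upper_right_sum_def sum_distrib_left)
qed

lemma sum_sum_delta_mult:
  fixes f :: "nat \<Rightarrow> nat \<Rightarrow> nat"
  assumes "a \<in> A" "b \<in> B" "finite A" "finite B"
  shows "(\<Sum>i\<in>A. \<Sum>j\<in>B. (if i = a \<and> j = b then 1 else 0) * f i j) = f a b"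
proof -
  have "(\<Sum>j\<in>B. (if i = a \<and> j = b then 1 else 0) * f i j) = (if i = a then f a b else 0)" for i
    using assms by (simp add: if_distrib[of "\<lambda>x. x * _"] cong: if_cong)
  then show ?thesis using assms by simp
qed

lemma pos_exponent_increment:
  fixes N :: "nat \<Rightarrow> nat \<Rightarrow> nat"
  assumes a: "1 \<le> a" "a \<le> k" and b: "1 \<le> b" "b \<le> l"
  shows "pos_exponent k l (\<lambda>i j. N i j + (if i = a \<and> j = b then 1 else 0))
       = pos_exponent k l N + upper_right_sum l N a b
         + (\<Sum>i\<in>{1..k}. \<Sum>j\<in>{1..l}. if a \<le> i \<and> j < b then N i j else 0)"
proof -
  define \<delta> where "\<delta> = (\<lambda>i j. if i = a \<and> j = b then 1 else (0::nat))"
  define \<iota> where "\<iota> = (\<lambda>i j. if a \<le> i \<and> j < b then 1 else (0::nat))"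
  let ?M = "\<lambda>i j. N i j + \<delta> i j"
  have "(\<Sum>j'\<in>{j<..l}. \<delta> i' j') = (if i' = a \<and> j < b then 1 else 0)" for i' j
    using b by (auto simp: \<delta>_def cong: if_cong)
  then have "(\<Sum>i'\<in>{1..i}. \<Sum>j'\<in>{j<..l}. \<delta> i' j') = \<iota> i j" for i j
    using a by (auto simp: \<iota>_def cong: if_cong)
  then have R: "upper_right_sum l ?M i j = upper_right_sum l N i j + \<iota> i j" for i j
    by (simp add: upper_right_sum_def sum.distrib)
  have "pos_exponent k l ?M = (\<Sum>i\<in>{1..k}. \<Sum>j\<in>{1..l}. N i j * upper_right_sum l N i j
      + N i j * \<iota> i j + \<delta> i j * upper_right_sum l N i j + \<delta> i j * \<iota> i j)"
    unfolding pos_exponent_eq_sum R by (simp add: algebra_simps)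
  also have "\<dots> = pos_exponent k l N + (\<Sum>i\<in>{1..k}. \<Sum>j\<in>{1..l}. N i j * \<iota> i j)
      + (\<Sum>i\<in>{1..k}. \<Sum>j\<in>{1..l}. \<delta> i j * upper_right_sum l N i j)
      + (\<Sum>i\<in>{1..k}. \<Sum>j\<in>{1..l}. \<delta> i j * \<iota> i j)"
    by (simp add: pos_exponent_eq_sum sum.distrib)
  also have "(\<Sum>i\<in>{1..k}. \<Sum>j\<in>{1..l}. \<delta> i j * upper_right_sum l N i j) = upper_right_sum l N a b"
    unfolding \<delta>_def by (rule sum_sum_delta_mult) (use a b in auto)
  also have "(\<Sum>i\<in>{1..k}. \<Sum>j\<in>{1..l}. \<delta> i j * \<iota> i j) = 0"
    unfolding \<delta>_def using sum_sum_delta_mult[of a "{1..k}" b "{1..l}" \<iota>] a b by (simp add: \<iota>_def)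
  also have "(\<Sum>i\<in>{1..k}. \<Sum>j\<in>{1..l}. N i j * \<iota> i j)
      = (\<Sum>i\<in>{1..k}. \<Sum>j\<in>{1..l}. if a \<le> i \<and> j < b then N i j else 0)"
    by (intro sum.cong refl) (auto simp: \<iota>_def)
  finally show ?thesis by (simp add: \<delta>_def)
qed

definition qint :: "real \<Rightarrow> nat \<Rightarrow> real" where
  "qint q m = (\<Sum>t<m. q ^ t)"

lemma qint_0 [simp]: "qint q 0 = 0"
  by (simp add: qint_def)

lemma qfact_Suc: "qfact q (Suc m) = qfact q m * qint q (Suc m)"
  by (simp add: qfact_def qint_def)

lemma qint_pos: "0 < q \<Longrightarrow> 1 \<le> m \<Longrightarrow> 0 < qint q m"
  unfolding qint_def by (rule sum_pos2[of _ 0]) auto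

lemma qfact_pos: "0 < q \<Longrightarrow> 0 < qfact q m"
  using qint_pos by (auto simp: qfact_def qint_def intro!: prod_pos)

lemma qint_add: "qint q (a + b) = qint q a + q ^ a * qint q b"
  by (induction b) (auto simp: qint_def algebra_simps power_add)

lemma qint_sum:
  fixes L :: nat and m :: "nat \<Rightarrow> nat"
  shows "(\<Sum>j\<in>{1..L}. q ^ (\<Sum>j'\<in>{1..<j}. m j') * qint q (m j)) = qint q (\<Sum>j\<in>{1..L}. m j)"
proof (induction L)
  case (Suc L)
  have "{1..<Suc L} = {1..L}" by auto
  then show ?case using Suc by (simp add: qint_add)
qed simp

lemma prod_mult_swap_point:
  fixes f f' :: "'b \<Rightarrow> real"
  assumes "finite A" "a \<in> A" "\<And>x. x \<in> A \<Longrightarrow> x \<noteq> a \<Longrightarrow> f x = f' x"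
  shows "prod f A * f' a = prod f' A * f a"
proof -
  have "prod f (A - {a}) = prod f' (A - {a})" using assms by (intro prod.cong) auto
  then show ?thesis using assms by (simp add: prod.remove)
qed

definition count_formula :: "real \<Rightarrow> nat list \<Rightarrow> nat list \<Rightarrow> (nat \<Rightarrow> nat \<Rightarrow> nat) \<Rightarrow> real" where
  "count_formula q \<alpha> \<beta> M = inverse q ^ pos_exponent (length \<alpha>) (length \<beta>) M
         * (\<Prod>i\<in>{1..length \<alpha>}. qfact q (\<alpha> ! (i - 1)))
         / (\<Prod>i\<in>{1..length \<alpha>}. \<Prod>j\<in>{1..length \<beta>}. qfact q (M i j))"

section \<open>The inductive step\<close>

text \<open>\<open>E_i\<^sub>0\<close> is the first space of the standard flag not contained in \<open>\<Bbbk>^n\<close>; for a column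
  \<open>j\<^sub>0\<close> with \<open>M(i\<^sub>0,j\<^sub>0) > 0\<close>, the data \<open>\<alpha>'\<close>, \<open>\<beta>' j\<^sub>0\<close>, \<open>M' j\<^sub>0\<close> describe the intersection with
  \<open>\<Bbbk>^n\<close>. Lists are 0-indexed, matrices 1-indexed.\<close>

locale flag_step =
  fixes n :: nat and \<alpha> \<beta> :: "nat list" and M :: "nat \<Rightarrow> nat \<Rightarrow> nat"
  assumes alpha: "sum_list \<alpha> = Suc n" and beta: "sum_list \<beta> = Suc n"
    and rows: "\<forall>i\<in>{1..length \<alpha>}. (\<Sum>j\<in>{1..length \<beta>}. M i j) = \<alpha> ! (i - 1)"
    and cols: "\<forall>j\<in>{1..length \<beta>}. (\<Sum>i\<in>{1..length \<alpha>}. M i j) = \<beta> ! (j - 1)"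
begin

abbreviation "k \<equiv> length \<alpha>"
abbreviation "l \<equiv> length \<beta>"
abbreviation "d i \<equiv> sum_list (take i \<alpha>)"

definition i0 :: nat where "i0 = (LEAST i. d i = Suc n)"
definition J :: "nat set" where "J = {j\<in>{1..l}. 1 \<le> M i0 j}"
definition \<alpha>' :: "nat list" where "\<alpha>' = \<alpha>[i0 - 1 := \<alpha> ! (i0 - 1) - 1]"
definition \<beta>' :: "nat \<Rightarrow> nat list" where "\<beta>' j0 = \<beta>[j0 - 1 := \<beta> ! (j0 - 1) - 1]"
definition M' :: "nat \<Rightarrow> nat \<Rightarrow> nat \<Rightarrow> nat" where
  "M' j0 = (\<lambda>i j. if i = i0 \<and> j = j0 then M i j - 1 else M i j)"

lemma d_mono: "i \<le> j \<Longrightarrow> j \<le> k \<Longrightarrow> d i \<le> d j"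
  by (simp add: sum_list_take_eq_sum_nth sum_mono2)

lemma d_Suc: "i < k \<Longrightarrow> d (Suc i) = d i + \<alpha> ! i"
  by (simp add: take_Suc_conv_app_nth)

lemma d_length: "d k = Suc n"
  using alpha by simp

lemma i0_spec: "d i0 = Suc n" "i0 \<le> k" "1 \<le> i0"
proof -
  show "d i0 = Suc n" unfolding i0_def by (rule LeastI[of _ k]) (rule d_length)
  show "i0 \<le> k" unfolding i0_def by (rule Least_le) (rule d_length)
  show "1 \<le> i0" using \<open>d i0 = Suc n\<close> by (cases i0) auto
qed

lemma d_less_i0: "i < i0 \<Longrightarrow> d i \<le> n"
  using not_less_Least[of i "\<lambda>i. d i = Suc n"] d_mono[of i k] i0_spec d_length
  unfolding i0_def[symmetric] by fastforce

lemma d_ge_i0: "i0 \<le> i \<Longrightarrow> i \<le> k \<Longrightarrow> d i = Suc n"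
  using d_mono[of i0 i] d_mono[of i k] i0_spec d_length by simp

lemma alpha_i0_pos: "1 \<le> \<alpha> ! (i0 - 1)"
proof -
  have "d i0 = d (i0 - 1) + \<alpha> ! (i0 - 1)" using d_Suc[of "i0 - 1"] i0_spec by simp
  then show ?thesis using d_less_i0[of "i0 - 1"] i0_spec by simp
qed

lemma alpha_after_i0: "i0 < i \<Longrightarrow> i \<le> k \<Longrightarrow> \<alpha> ! (i - 1) = 0"
  using d_Suc[of "i - 1"] d_ge_i0[of i] d_ge_i0[of "i - 1"] by simp

lemma M_after_i0: "\<forall>i\<in>{i0<..k}. \<forall>j\<in>{1..l}. M i j = 0"
proof (intro ballI)
  fix i j assume i: "i \<in> {i0<..k}" and j: "j \<in> {1..l}"
  have "(\<Sum>j\<in>{1..l}. M i j) = 0" using rows alpha_after_i0[of i] i i0_spec by auto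
  then show "M i j = 0" using j by simp
qed

lemma corner_sum_after_i0: "i0 \<le> i \<Longrightarrow> i \<le> k \<Longrightarrow> j \<le> l \<Longrightarrow> corner_sum M i j = sum_list (take j \<beta>)"
  by (rule corner_sum_eq_column_sums[OF _ M_after_i0]) (use cols in auto)

lemma J_subset: "J \<subseteq> {1..l}"
  by (auto simp: J_def)

lemma beta_ge_M_i0: "j0 \<in> J \<Longrightarrow> M i0 j0 \<le> \<beta> ! (j0 - 1)"
  using member_le_sum[of i0 "{1..k}" "\<lambda>i. M i j0"] cols i0_spec by (auto simp: J_def)

lemma length_alpha' [simp]: "length \<alpha>' = k"
  by (simp add: \<alpha>'_def)

lemma length_beta' [simp]: "length (\<beta>' j0) = l"
  by (simp add: \<beta>'_def)

lemma d_alpha': "i \<le> k \<Longrightarrow> sum_list (take i \<alpha>') = min (d i) n"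
proof -
  assume i: "i \<le> k"
  have "sum_list (take i \<alpha>') + (if i0 - 1 < i then 1 else 0) = d i"
    unfolding \<alpha>'_def using i i0_spec alpha_i0_pos by (intro sum_list_take_decrement) auto
  moreover have "i0 - 1 < i \<longleftrightarrow> i0 \<le> i" using i0_spec by auto
  ultimately show ?thesis using d_less_i0[of i] d_ge_i0[of i] i by (auto split: if_splits)
qed

lemma sum_alpha': "sum_list \<alpha>' = n"
  using d_alpha'[of k] d_length by simp

lemma take_beta':
  assumes "j0 \<in> J" "j \<le> l"
  shows "sum_list (take j (\<beta>' j0)) + (if j0 \<le> j then 1 else 0) = sum_list (take j \<beta>)"
proof -
  have "sum_list (take j (\<beta>' j0)) + (if j0 - 1 < j then 1 else 0) = sum_list (take j \<beta>)"
    unfolding \<beta>'_def using assms beta_ge_M_i0[OF assms(1)]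
    by (intro sum_list_take_decrement) (auto simp: J_def)
  moreover have "j0 - 1 < j \<longleftrightarrow> j0 \<le> j" using assms by (auto simp: J_def)
  ultimately show ?thesis by simp
qed

lemma sum_beta': "j0 \<in> J \<Longrightarrow> sum_list (\<beta>' j0) = n"
  using take_beta'[of j0 l] beta J_subset by auto

lemma rows':
  assumes j0: "j0 \<in> J"
  shows "\<forall>i\<in>{1..k}. (\<Sum>j\<in>{1..l}. M' j0 i j) = \<alpha>' ! (i - 1)"
proof
  fix i assume i: "i \<in> {1..k}"
  show "(\<Sum>j\<in>{1..l}. M' j0 i j) = \<alpha>' ! (i - 1)"
  proof (cases "i = i0")
    case True
    have "(\<Sum>j\<in>{1..l}. if j = j0 then M i0 j - 1 else M i0 j) + 1 = (\<Sum>j\<in>{1..l}. M i0 j)"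
      using sum_decrement[of "{1..l}" "M i0" j0] j0 by (auto simp: J_def)
    then show ?thesis using True rows i alpha_i0_pos
      by (auto simp: M'_def \<alpha>'_def cong: if_cong)
  next
    case False
    then have "i - 1 \<noteq> i0 - 1" using i i0_spec by auto
    then show ?thesis using False rows i by (simp add: M'_def \<alpha>'_def)
  qed
qed

lemma cols':
  assumes j0: "j0 \<in> J"
  shows "\<forall>j\<in>{1..l}. (\<Sum>i\<in>{1..k}. M' j0 i j) = \<beta>' j0 ! (j - 1)"
proof
  fix j assume j: "j \<in> {1..l}"
  show "(\<Sum>i\<in>{1..k}. M' j0 i j) = \<beta>' j0 ! (j - 1)"
  proof (cases "j = j0")
    case True
    have "(\<Sum>i\<in>{1..k}. if i = i0 then M i j0 - 1 else M i j0) + 1 = (\<Sum>i\<in>{1..k}. M i j0)"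
      using sum_decrement[of "{1..k}" "\<lambda>i. M i j0" i0] j0 i0_spec by (auto simp: J_def)
    then show ?thesis using True j0 cols j beta_ge_M_i0[OF j0]
      by (auto simp: M'_def \<beta>'_def J_def cong: if_cong)
  next
    case False
    then have "j - 1 \<noteq> j0 - 1" using j j0 by (auto simp: J_def)
    then show ?thesis using False cols j by (simp add: M'_def \<beta>'_def)
  qed
qed

lemma corner_sum_M':
  "j0 \<in> J \<Longrightarrow> corner_sum (M' j0) i j + (if i0 \<le> i \<and> j0 \<le> j then 1 else 0) = corner_sum M i j"
  unfolding M'_def by (rule corner_sum_decrement) (use i0_spec in \<open>auto simp: J_def\<close>)

lemma corner_sum_M'_after_i0:
  assumes "j0 \<in> J" "i0 \<le> i" "i \<le> k" "j \<le> l"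
  shows "corner_sum (M' j0) i j = sum_list (take j (\<beta>' j0))"
  using corner_sum_eq_column_sums[where \<beta>="\<beta>' j0" and k=k and M="M' j0" and r=i0]
    cols'[OF assms(1)]
    M_after_i0 assms by (simp add: M'_def)

definition row_prefix :: "nat \<Rightarrow> nat" where
  "row_prefix j0 = (\<Sum>j\<in>{1..<j0}. M i0 j)"

lemma M_eq_M'_plus: "j0 \<in> J \<Longrightarrow> M = (\<lambda>i j. M' j0 i j + (if i = i0 \<and> j = j0 then 1 else 0))"
  by (auto simp: M'_def J_def fun_eq_iff)

lemma upper_right_sum_M':
  assumes j0: "j0 \<in> J"
  shows "upper_right_sum l (M' j0) i0 j0 = Suc n - corner_sum M k j0"
proof -
  have j0l: "1 \<le> j0" "j0 \<le> l" using j0 by (auto simp: J_def)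
  have "(\<Sum>j'\<in>{j0<..l}. M i' j') + (\<Sum>j'\<in>{1..j0}. M i' j') = (\<Sum>j'\<in>{1..l}. M i' j')" for i'
  proof -
    have "(\<Sum>j'\<in>{1..l}. M i' j') = (\<Sum>j'\<in>{1..j0} \<union> {j0<..l}. M i' j')"
      using j0l by (intro sum.cong) auto
    also have "\<dots> = (\<Sum>j'\<in>{1..j0}. M i' j') + (\<Sum>j'\<in>{j0<..l}. M i' j')"
      by (rule sum.union_disjoint) auto
    finally show ?thesis by simp
  qed
  then have "upper_right_sum l M i0 j0 + corner_sum M i0 j0 = corner_sum M i0 l"
    unfolding upper_right_sum_def corner_sum_def by (simp add: sum.distrib[symmetric])
  moreover have "upper_right_sum l (M' j0) i0 j0 = upper_right_sum l M i0 j0"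
    unfolding upper_right_sum_def M'_def by (intro sum.cong refl) auto
  moreover have "corner_sum M i0 l = Suc n" "corner_sum M i0 j0 = corner_sum M k j0"
    using corner_sum_after_i0[of i0] corner_sum_after_i0[of k j0] i0_spec j0l beta by simp_all
  ultimately show ?thesis by simp
qed

lemma lower_left_sum_M':
  assumes j0: "j0 \<in> J"
  shows "(\<Sum>i\<in>{1..k}. \<Sum>j\<in>{1..l}. if i0 \<le> i \<and> j < j0 then M' j0 i j else 0) = row_prefix j0"
proof -
  have j0l: "1 \<le> j0" "j0 \<le> l" using j0 by (auto simp: J_def)
  have "(\<Sum>j\<in>{1..l}. if i0 \<le> i \<and> j < j0 then M' j0 i j else 0) = (if i = i0 then row_prefix j0 else 0)"
    if i: "i \<in> {1..k}" for i
  proof (cases "i = i0")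
    case True
    have "(\<Sum>j\<in>{1..l}. if j < j0 then M i0 j else 0) = (\<Sum>j\<in>{1..l} \<inter> {..<j0}. M i0 j)"
      by (simp add: sum.inter_restrict)
    also have "{1..l} \<inter> {..<j0} = {1..<j0}" using j0l by auto
    finally show ?thesis using True by (simp add: M'_def row_prefix_def cong: if_cong)
  next
    case False
    then show ?thesis using M_after_i0 i by (auto simp: M'_def intro!: sum.neutral)
  qed
  then have "(\<Sum>i\<in>{1..k}. \<Sum>j\<in>{1..l}. if i0 \<le> i \<and> j < j0 then M' j0 i j else 0)
      = (\<Sum>i\<in>{1..k}. if i = i0 then row_prefix j0 else 0)"
    by (rule sum.cong[OF refl])
  also have "\<dots> = row_prefix j0" using i0_spec by simp
  finally show ?thesis .
qed

lemma pos_exponent_M':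
  assumes j0: "j0 \<in> J"
  shows "pos_exponent k l M = pos_exponent k l (M' j0) + (Suc n - corner_sum M k j0) + row_prefix j0"
proof -
  have "1 \<le> j0" "j0 \<le> l" using j0 by (auto simp: J_def)
  then have "pos_exponent k l M = pos_exponent k l (M' j0) + upper_right_sum l (M' j0) i0 j0
      + (\<Sum>i\<in>{1..k}. \<Sum>j\<in>{1..l}. if i0 \<le> i \<and> j < j0 then M' j0 i j else 0)"
    using i0_spec by (subst M_eq_M'_plus[OF j0], intro pos_exponent_increment) auto
  then show ?thesis
    using upper_right_sum_M'[OF j0] lower_left_sum_M'[OF j0] by simp
qed

lemma prod_qfact_alpha':
  assumes "0 < q"
  shows "(\<Prod>i\<in>{1..k}. qfact q (\<alpha> ! (i - 1)))
       = (\<Prod>i\<in>{1..k}. qfact q (\<alpha>' ! (i - 1))) * qint q (\<alpha> ! (i0 - 1))"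
proof -
  have "(\<Prod>i\<in>{1..k}. qfact q (\<alpha>' ! (i - 1))) * qfact q (\<alpha> ! (i0 - 1))
      = (\<Prod>i\<in>{1..k}. qfact q (\<alpha> ! (i - 1))) * qfact q (\<alpha>' ! (i0 - 1))"
    by (rule prod_mult_swap_point) (use i0_spec in \<open>auto simp: \<alpha>'_def nth_list_update\<close>)
  moreover have "\<alpha> ! (i0 - 1) = Suc (\<alpha>' ! (i0 - 1))"
    using alpha_i0_pos i0_spec by (simp add: \<alpha>'_def)
  moreover have "0 < qfact q (\<alpha>' ! (i0 - 1))" using assms by (rule qfact_pos)
  ultimately show ?thesis by (simp add: qfact_Suc)
qed

lemma prod_qfact_M':
  assumes "0 < q" "j0 \<in> J"
  shows "(\<Prod>i\<in>{1..k}. \<Prod>j\<in>{1..l}. qfact q (M i j))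
       = (\<Prod>i\<in>{1..k}. \<Prod>j\<in>{1..l}. qfact q (M' j0 i j)) * qint q (M i0 j0)"
proof -
  define P where "P = (\<Prod>i\<in>{1..k}. \<Prod>j\<in>{1..l}. qfact q (M i j))"
  define P' where "P' = (\<Prod>i\<in>{1..k}. \<Prod>j\<in>{1..l}. qfact q (M' j0 i j))"
  define R where "R = (\<Prod>j\<in>{1..l}. qfact q (M i0 j))"
  define R' where "R' = (\<Prod>j\<in>{1..l}. qfact q (M' j0 i0 j))"
  have j0l: "1 \<le> j0" "j0 \<le> l" using assms by (auto simp: J_def)
  have "R' * qfact q (M i0 j0) = R * qfact q (M' j0 i0 j0)"
    unfolding R_def R'_def by (rule prod_mult_swap_point) (use j0l in \<open>auto simp: M'_def\<close>)
  moreover have "M i0 j0 = Suc (M' j0 i0 j0)" using assms by (auto simp: M'_def J_def)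
  moreover have "0 < qfact q (M' j0 i0 j0)" using assms by (intro qfact_pos)
  ultimately have "R = R' * qint q (M i0 j0)" by (simp add: qfact_Suc)
  moreover have "P' * R = P * R'"
    unfolding P_def P'_def R_def R'_def
    by (rule prod_mult_swap_point) (use i0_spec in \<open>auto simp: M'_def\<close>)
  moreover have "0 < R'" unfolding R'_def using assms by (intro prod_pos qfact_pos)
  ultimately show ?thesis unfolding P_def[symmetric] P'_def[symmetric] by simp
qed

lemma count_formula_M':
  assumes q: "0 < q" and j0: "j0 \<in> J"
  shows "count_formula q \<alpha>' (\<beta>' j0) (M' j0) * inverse q ^ (Suc n - corner_sum M k j0)
       = count_formula q \<alpha> \<beta> M * (q ^ row_prefix j0 * qint q (M i0 j0)) / qint q (\<alpha> ! (i0 - 1))"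
proof -
  have "0 < qint q (\<alpha> ! (i0 - 1))" "0 < qint q (M i0 j0)"
    using q alpha_i0_pos j0 by (auto simp: J_def intro: qint_pos)
  moreover have "0 < (\<Prod>i\<in>{1..k}. \<Prod>j\<in>{1..l}. qfact q (M' j0 i j))"
    using q by (intro prod_pos qfact_pos)
  moreover have "inverse q ^ row_prefix j0 * q ^ row_prefix j0 = 1"
    using q by (simp add: power_mult_distrib[symmetric])
  moreover have "q \<noteq> 0" using q by simp
  ultimately show ?thesis
    unfolding count_formula_def pos_exponent_M'[OF j0] prod_qfact_alpha'[OF q] prod_qfact_M'[OF q j0]
    by (simp add: power_add field_simps)
qed

lemma count_formula_recurrence:
  assumes q: "0 < q"
  shows "(\<Sum>j0\<in>J. count_formula q \<alpha>' (\<beta>' j0) (M' j0) * inverse q ^ (Suc n - corner_sum M k j0))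
       = count_formula q \<alpha> \<beta> M"
proof -
  have "(\<Sum>j0\<in>J. q ^ row_prefix j0 * qint q (M i0 j0)) = (\<Sum>j0\<in>{1..l}. q ^ row_prefix j0 * qint q (M i0 j0))"
    by (rule sum.mono_neutral_left) (auto simp: J_def Suc_le_eq intro: gr0I)
  also have "\<dots> = qint q (\<Sum>j\<in>{1..l}. M i0 j)"
    unfolding row_prefix_def by (rule qint_sum)
  also have "(\<Sum>j\<in>{1..l}. M i0 j) = \<alpha> ! (i0 - 1)"
    using rows i0_spec by auto
  finally have "(\<Sum>j0\<in>J. q ^ row_prefix j0 * qint q (M i0 j0)) = qint q (\<alpha> ! (i0 - 1))" .
  moreover have "0 < qint q (\<alpha> ! (i0 - 1))"
    using q alpha_i0_pos by (rule qint_pos)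
  ultimately show ?thesis
    by (simp add: count_formula_M'[OF q] sum_divide_distrib[symmetric] sum_distrib_left[symmetric])
qed

end

locale flag_count_step = flag_step +
  fixes field :: "'a::{field,finite} itself"
begin

definition H :: "(nat \<Rightarrow> 'a) set" where
  "H = ambient n"

definition S :: "(nat \<Rightarrow> 'a) set list set" where
  "S = {F \<in> Fl (Suc n) \<beta>. rel_pos (std_flag \<alpha>) F M}"

definition S' :: "nat \<Rightarrow> (nat \<Rightarrow> 'a) set list set" where
  "S' j0 = {G \<in> Fl n (\<beta>' j0). rel_pos (std_flag \<alpha>') G (M' j0)}"

definition jump :: "(nat \<Rightarrow> 'a) set list \<Rightarrow> nat" where
  "jump F = (LEAST j. \<not> F ! j \<subseteq> H)"

definition inter_H :: "(nat \<Rightarrow> 'a) set list \<Rightarrow> (nat \<Rightarrow> 'a) set list" where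
  "inter_H F = map (\<lambda>X. X \<inter> H) F"

lemma S_D:
  assumes "F \<in> S"
  shows "length F = Suc l"
    and "\<And>j. j \<le> l \<Longrightarrow> fsubspace (F ! j)"
    and "\<And>j. j \<le> l \<Longrightarrow> F ! j \<subseteq> ambient (Suc n)"
    and "\<And>j. j \<le> l \<Longrightarrow> card (F ! j) = CARD('a) ^ sum_list (take j \<beta>)"
    and "\<forall>j<l. F ! j \<subseteq> F ! Suc j"
    and "\<And>i j. i \<le> k \<Longrightarrow> j \<le> l \<Longrightarrow> card (ambient (d i) \<inter> F ! j) = CARD('a) ^ corner_sum M i j"
  using assms unfolding S_def Fl_rel_pos_iff_card by auto

lemma S'_iff:
  "G \<in> S' j0 \<longleftrightarrow> length G = Suc l
     \<and> (\<forall>j\<le>l. fsubspace (G ! j) \<and> G ! j \<subseteq> ambient n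
          \<and> card (G ! j) = CARD('a) ^ sum_list (take j (\<beta>' j0)))
     \<and> (\<forall>j<l. G ! j \<subseteq> G ! Suc j)
     \<and> (\<forall>i\<le>k. \<forall>j\<le>l. card (ambient (sum_list (take i \<alpha>')) \<inter> G ! j) = CARD('a) ^ corner_sum (M' j0) i j)"
  unfolding S'_def Fl_rel_pos_iff_card length_alpha' length_beta' ..

lemma subspace_H: "fsubspace H"
  unfolding H_def by (rule subspace_ambient)

lemma H_subset: "H \<subseteq> ambient (Suc n)"
  unfolding H_def by (rule ambient_mono) simp

lemma ambient_d_subset_H: "i < i0 \<Longrightarrow> ambient (d i) \<subseteq> H"
  unfolding H_def using d_less_i0 by (intro ambient_mono)

lemma ambient_d_after_i0: "i0 \<le> i \<Longrightarrow> i \<le> k \<Longrightarrow> ambient (d i) = ambient (Suc n)"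
  using d_ge_i0 by simp

lemma ambient_alpha': "i \<le> k \<Longrightarrow> ambient (sum_list (take i \<alpha>')) = ambient (d i) \<inter> H"
  by (simp add: d_alpha' H_def ambient_Int)

lemma S_last:
  assumes "F \<in> S"
  shows "F ! l = ambient (Suc n)"
proof (rule card_subset_eq[OF finite_ambient])
  show "F ! l \<subseteq> ambient (Suc n)" using S_D(3)[OF assms] by simp
  show "card (F ! l) = card (ambient (Suc n) :: (nat \<Rightarrow> 'a) set)"
    using S_D(4)[OF assms, of l] beta by (simp add: card_ambient)
qed

lemma S_first:
  assumes "F \<in> S"
  shows "F ! 0 \<subseteq> H"
proof -
  have "card (F ! 0) = 1" "0 \<in> F ! 0"
    using S_D(2,4)[OF assms, of 0] vs.subspace_0 by simp_all
  then have "F ! 0 = {0}" by (metis card_1_singletonE singletonD)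
  then show ?thesis by (simp add: H_def ambient_def)
qed

lemma jump_spec:
  assumes "F \<in> S"
  shows "1 \<le> jump F" "jump F \<le> l" "\<not> F ! jump F \<subseteq> H"
    and "\<And>j. j < jump F \<Longrightarrow> F ! j \<subseteq> H"
    and "\<And>j. jump F \<le> j \<Longrightarrow> j \<le> l \<Longrightarrow> \<not> F ! j \<subseteq> H"
proof -
  have "unitvec n \<in> F ! l" using S_last[OF assms] unitvec_in_ambient[of n "Suc n"] by simp
  moreover have "unitvec n \<notin> H" by (simp add: H_def ambient_def unitvec_def)
  ultimately have last: "\<not> F ! l \<subseteq> H" by blast
  show leaves: "\<not> F ! jump F \<subseteq> H" unfolding jump_def by (rule LeastI[of _ l]) (rule last)
  show "jump F \<le> l" unfolding jump_def by (rule Least_le) (rule last)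
  show "\<And>j. j < jump F \<Longrightarrow> F ! j \<subseteq> H" unfolding jump_def using not_less_Least by blast
  show "1 \<le> jump F" using leaves S_first[OF assms] by (cases "jump F") auto
  show "\<And>j. jump F \<le> j \<Longrightarrow> j \<le> l \<Longrightarrow> \<not> F ! j \<subseteq> H"
    using chain_nth_mono[OF S_D(5)[OF assms]] leaves by blast
qed

text \<open>If \<open>M(i\<^sub>0,j\<^sub>0) = 0\<close>, the rectangle identity for corner sums would turn the strict
  inequality of \<open>card_Int_mult_less\<close> into an equality.\<close>

lemma jump_in_J:
  assumes F: "F \<in> S"
  shows "jump F \<in> J"
proof -
  define j0 where "j0 = jump F"
  note j0 = jump_spec[OF F, folded j0_def]
  define A where "A = (ambient (d (i0 - 1)) :: (nat \<Rightarrow> 'a) set)"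
  define X where "X = F ! (j0 - 1)"
  define Y where "Y = F ! j0"
  have "card (A \<inter> Y) * card X < card Y * card (A \<inter> X)"
  proof (rule card_Int_mult_less[OF _ _ _ subspace_H])
    show "A \<subseteq> H" unfolding A_def using i0_spec by (intro ambient_d_subset_H) simp
    show "X \<subseteq> Y" unfolding X_def Y_def using chain_nth_mono[OF S_D(5)[OF F]] j0 by simp
    show "X \<subseteq> H" "\<not> Y \<subseteq> H" unfolding X_def Y_def using j0 by simp_all
    show "fsubspace A" unfolding A_def by (rule subspace_ambient)
    show "fsubspace X" "fsubspace Y" unfolding X_def Y_def using S_D(2)[OF F] j0 by auto
    show "finite Y" unfolding Y_def using S_D(3)[OF F] j0 by (auto intro: finite_subset_ambient)
  qed
  moreover have "card Y = CARD('a) ^ corner_sum M i0 j0" "card X = CARD('a) ^ corner_sum M i0 (j0 - 1)"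
    using S_D(6)[OF F, of i0] S_D(3)[OF F] ambient_d_after_i0[of i0] i0_spec j0
    unfolding X_def Y_def by (auto simp: Int_absorb1)
  moreover have "card (A \<inter> Y) = CARD('a) ^ corner_sum M (i0 - 1) j0"
    "card (A \<inter> X) = CARD('a) ^ corner_sum M (i0 - 1) (j0 - 1)"
    using S_D(6)[OF F, of "i0 - 1"] i0_spec j0 unfolding A_def X_def Y_def by auto
  ultimately have "CARD('a) ^ (corner_sum M (i0 - 1) j0 + corner_sum M i0 (j0 - 1))
      < CARD('a) ^ (corner_sum M i0 j0 + corner_sum M (i0 - 1) (j0 - 1))"
    by (simp only: power_add)
  then have "corner_sum M (i0 - 1) j0 + corner_sum M i0 (j0 - 1)
      < corner_sum M i0 j0 + corner_sum M (i0 - 1) (j0 - 1)"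
    using two_le_card_field[where 'a='a] by simp
  then have "1 \<le> M i0 j0"
    using corner_sum_rectangle[of i0 j0 M] i0_spec(3) j0(1) by linarith
  then show ?thesis using j0(1,2) by (simp add: J_def j0_def)
qed

lemma card_Int_H:
  assumes F: "F \<in> S" and j: "j \<le> l"
  shows "card (F ! j \<inter> H) = CARD('a) ^ sum_list (take j (\<beta>' (jump F)))"
proof (cases "j < jump F")
  case True
  then show ?thesis
    using jump_spec(4)[OF F True] S_D(4)[OF F j] take_beta'[OF jump_in_J[OF F] j]
    by (simp add: Int_absorb2)
next
  case False
  then have "\<not> F ! j \<subseteq> ambient n" using jump_spec(5)[OF F, of j] j by (simp add: H_def)
  then have "card (F ! j) = CARD('a) * card (F ! j \<inter> H)"
    unfolding H_def by (rule card_subspace_not_in_hyperplane[OF S_D(2,3)[OF F j]])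
  moreover have "sum_list (take j \<beta>) = Suc (sum_list (take j (\<beta>' (jump F))))"
    using take_beta'[OF jump_in_J[OF F] j] False by simp
  ultimately show ?thesis
    using S_D(4)[OF F j] two_le_card_field[where 'a='a] by simp
qed

lemma inter_H_in_S':
  assumes F: "F \<in> S"
  shows "inter_H F \<in> S' (jump F)"
  unfolding S'_iff
proof (intro conjI allI impI)
  have nth: "inter_H F ! j = F ! j \<inter> H" if "j \<le> l" for j
    using S_D(1)[OF F] that by (simp add: inter_H_def)
  show "length (inter_H F) = Suc l" using S_D(1)[OF F] by (simp add: inter_H_def)
  fix i j assume i: "i \<le> k" and j: "j \<le> l"
  show "card (ambient (sum_list (take i \<alpha>')) \<inter> inter_H F ! j) = CARD('a) ^ corner_sum (M' (jump F)) i j"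
  proof (cases "i < i0")
    case True
    then have "ambient (sum_list (take i \<alpha>')) \<inter> inter_H F ! j = ambient (d i) \<inter> F ! j"
      using ambient_alpha'[OF i] nth[OF j] ambient_d_subset_H by auto
    then show ?thesis using S_D(6)[OF F i j] corner_sum_M'[OF jump_in_J[OF F], of i j] True by simp
  next
    case False
    then have "ambient (sum_list (take i \<alpha>')) \<inter> inter_H F ! j = F ! j \<inter> H"
      using ambient_alpha'[OF i] nth[OF j] ambient_d_after_i0[of i] i S_D(3)[OF F j] H_subset by auto
    then show ?thesis
      using card_Int_H[OF F j] corner_sum_M'_after_i0[OF jump_in_J[OF F] _ i j] False by simp
  qed
next
  fix j
  show "j \<le> l \<Longrightarrow> fsubspace (inter_H F ! j)"
    using S_D(1,2)[OF F] subspace_H by (auto simp: inter_H_def intro: vs.subspace_inter)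
  show "j \<le> l \<Longrightarrow> inter_H F ! j \<subseteq> ambient n"
    using S_D(1)[OF F] by (auto simp: inter_H_def H_def)
  show "j \<le> l \<Longrightarrow> card (inter_H F ! j) = CARD('a) ^ sum_list (take j (\<beta>' (jump F)))"
    using S_D(1)[OF F] card_Int_H[OF F] by (simp add: inter_H_def)
  show "j < l \<Longrightarrow> inter_H F ! j \<subseteq> inter_H F ! Suc j"
    using S_D(1,5)[OF F] by (auto simp: inter_H_def)
qed

lemma S'_D:
  assumes "G \<in> S' j0"
  shows "length G = Suc l"
    and "\<And>j. j \<le> l \<Longrightarrow> fsubspace (G ! j)"
    and "\<And>j. j \<le> l \<Longrightarrow> G ! j \<subseteq> ambient n"
    and "\<And>j. j \<le> l \<Longrightarrow> card (G ! j) = CARD('a) ^ sum_list (take j (\<beta>' j0))"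
    and "\<forall>j<l. G ! j \<subseteq> G ! Suc j"
    and "\<And>i j. i \<le> k \<Longrightarrow> j \<le> l \<Longrightarrow>
           card (ambient (sum_list (take i \<alpha>')) \<inter> G ! j) = CARD('a) ^ corner_sum (M' j0) i j"
  using assms unfolding S'_iff by auto

definition pivots :: "(nat \<Rightarrow> 'a) set" where
  "pivots = {v \<in> ambient (Suc n). v n = 1}"

definition extend :: "nat \<Rightarrow> (nat \<Rightarrow> 'a) set list \<Rightarrow> (nat \<Rightarrow> 'a) \<Rightarrow> (nat \<Rightarrow> 'a) set list" where
  "extend j0 G v = map (\<lambda>j. if j < j0 then G ! j else line_ext (G ! j) v) [0..<Suc l]"

lemma length_extend [simp]: "length (extend j0 G v) = Suc l"
  by (simp add: extend_def)

lemma nth_extend: "j \<le> l \<Longrightarrow> extend j0 G v ! j = (if j < j0 then G ! j else line_ext (G ! j) v)"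
  by (simp add: extend_def del: upt_Suc)

lemma card_pivots: "card pivots = CARD('a) ^ n"
proof -
  have "pivots = (\<lambda>h. h + unitvec n) ` ambient n"
  proof (intro set_eqI iffI)
    fix v :: "nat \<Rightarrow> 'a" assume v: "v \<in> pivots"
    then have "v - unitvec n \<in> ambient (Suc n)"
      using unitvec_in_ambient[of n "Suc n"] subspace_ambient[of "Suc n"]
      by (auto simp: pivots_def intro: vs.subspace_diff)
    moreover have "(v - unitvec n) n = 0"
      using v by (simp add: pivots_def unitvec_def)
    ultimately have "v - unitvec n \<in> ambient n"
      using ambient_Suc_iff by blast
    then show "v \<in> (\<lambda>h. h + unitvec n) ` ambient n" by (intro image_eqI[of _ _ "v - unitvec n"]) auto
  next
    fix v :: "nat \<Rightarrow> 'a" assume "v \<in> (\<lambda>h. h + unitvec n) ` ambient n"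
    then show "v \<in> pivots" by (auto simp: pivots_def ambient_def unitvec_def)
  qed
  moreover have "inj_on (\<lambda>h. h + unitvec n) (ambient n :: (nat \<Rightarrow> 'a) set)" by (auto intro: inj_onI)
  ultimately show ?thesis by (simp add: card_image card_ambient)
qed

context
  fixes j0 :: nat and G :: "(nat \<Rightarrow> 'a) set list" and v :: "nat \<Rightarrow> 'a"
  assumes j0: "j0 \<in> J" and G: "G \<in> S' j0" and v: "v \<in> pivots"
begin

lemma pivot_spec: "v n = 1" "v \<in> ambient (Suc n)" "v \<notin> H"
  using v by (auto simp: pivots_def H_def ambient_def)

lemma subspace_extend_nth: "j \<le> l \<Longrightarrow> fsubspace (extend j0 G v ! j)"
  using S'_D(2)[OF G] subspace_line_ext[OF S'_D(2)[OF G]] by (simp add: nth_extend)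

lemma extend_nth_subset_ambient:
  assumes j: "j \<le> l"
  shows "extend j0 G v ! j \<subseteq> ambient (Suc n)"
proof -
  have "G ! j \<subseteq> ambient (Suc n)" using S'_D(3)[OF G j] H_subset unfolding H_def by blast
  then show ?thesis using line_ext_subset_ambient[OF _ pivot_spec(2)] by (simp add: nth_extend[OF j])
qed

lemma extend_nth_Int_H:
  assumes j: "j \<le> l"
  shows "extend j0 G v ! j \<inter> H = G ! j"
  using S'_D(3)[OF G j] line_ext_Int_ambient[of "G ! j" n v] S'_D(2)[OF G j] pivot_spec(1)
  by (auto simp: nth_extend[OF j] H_def)

lemma card_extend_nth:
  assumes j: "j \<le> l"
  shows "card (extend j0 G v ! j) = CARD('a) ^ sum_list (take j \<beta>)"
proof (cases "j < j0")
  case True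
  then show ?thesis using S'_D(4)[OF G j] take_beta'[OF j0 j] by (simp add: nth_extend[OF j])
next
  case False
  then have "card (extend j0 G v ! j) = CARD('a) * card (G ! j)"
    using card_line_ext[of "G ! j" n v] S'_D(3)[OF G j] pivot_spec(1) by (simp add: nth_extend[OF j])
  moreover have "sum_list (take j \<beta>) = Suc (sum_list (take j (\<beta>' j0)))"
    using take_beta'[OF j0 j] False by simp
  ultimately show ?thesis using S'_D(4)[OF G j] by simp
qed

lemma extend_chain: "\<forall>j<l. extend j0 G v ! j \<subseteq> extend j0 G v ! Suc j"
proof (intro allI impI)
  fix j assume j: "j < l"
  have "G ! j \<subseteq> G ! Suc j" using S'_D(5)[OF G] j by simp
  moreover have "G ! Suc j \<subseteq> line_ext (G ! Suc j) v"
    using subset_line_ext[OF S'_D(2)[OF G]] j by simp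
  ultimately show "extend j0 G v ! j \<subseteq> extend j0 G v ! Suc j"
    using j line_ext_mono[OF \<open>G ! j \<subseteq> G ! Suc j\<close>, of v] by (auto simp: nth_extend)
qed

lemma card_ambient_Int_extend_nth:
  assumes i: "i \<le> k" and j: "j \<le> l"
  shows "card (ambient (d i) \<inter> extend j0 G v ! j) = CARD('a) ^ corner_sum M i j"
proof (cases "i < i0")
  case True
  then have "ambient (d i) \<inter> extend j0 G v ! j = ambient (sum_list (take i \<alpha>')) \<inter> G ! j"
    using extend_nth_Int_H[OF j] ambient_alpha'[OF i] ambient_d_subset_H by auto
  then show ?thesis
    using S'_D(6)[OF G i j] corner_sum_M'[OF j0, of i j] True by simp
next
  case False
  then have "ambient (d i) \<inter> extend j0 G v ! j = extend j0 G v ! j"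
    using ambient_d_after_i0[of i] i extend_nth_subset_ambient[OF j] by auto
  then show ?thesis
    using card_extend_nth[OF j] corner_sum_after_i0[of i j] False i j by simp
qed

lemma extend_in_S: "extend j0 G v \<in> S"
  unfolding S_def Fl_rel_pos_iff_card
  using subspace_extend_nth extend_nth_subset_ambient card_extend_nth extend_chain
    card_ambient_Int_extend_nth by (intro conjI allI impI) simp_all

lemma inter_H_extend: "inter_H (extend j0 G v) = G"
  by (rule nth_equalityI) (use S'_D(1)[OF G] extend_nth_Int_H in \<open>auto simp: inter_H_def\<close>)

lemma jump_extend: "jump (extend j0 G v) = j0"
  unfolding jump_def
proof (rule Least_equality)
  have "j0 \<le> l" using j0 by (simp add: J_def)
  then show "\<not> extend j0 G v ! j0 \<subseteq> H"
    using vector_in_line_ext[OF S'_D(2)[OF G]] pivot_spec(3) by (auto simp: nth_extend)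
  show "j0 \<le> j" if "\<not> extend j0 G v ! j \<subseteq> H" for j
    using that S'_D(3)[OF G, of j] \<open>j0 \<le> l\<close> by (cases "j0 \<le> j") (auto simp: nth_extend H_def)
qed

lemma extend_eq_iff:
  "{w \<in> pivots. extend j0 G w = extend j0 G v} = (\<lambda>g. v + g) ` (G ! j0)"
proof (intro set_eqI iffI)
  have j0l: "j0 \<le> l" using j0 by (simp add: J_def)
  fix w assume "w \<in> {w \<in> pivots. extend j0 G w = extend j0 G v}"
  then have w: "w \<in> pivots" "line_ext (G ! j0) w = line_ext (G ! j0) v"
    using nth_extend[OF j0l] by (auto dest: arg_cong[where f="\<lambda>F. F ! j0"])
  then have "w \<in> line_ext (G ! j0) v" using vector_in_line_ext[OF S'_D(2)[OF G j0l]] by blast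
  then obtain c g where cg: "g \<in> G ! j0" "w = g + fscale c v" by (auto simp: mem_line_ext)
  have "g n = 0" using cg S'_D(3)[OF G j0l] by (auto simp: ambient_def)
  then have "c = 1" using cg w pivot_spec by (simp add: pivots_def fscale_def)
  then show "w \<in> (\<lambda>g. v + g) ` (G ! j0)" using cg by (auto simp: fscale_def fun_eq_iff)
next
  fix w assume "w \<in> (\<lambda>g. v + g) ` (G ! j0)"
  then obtain g where g: "g \<in> G ! j0" "w = v + g" by auto
  have "w \<in> pivots" using g S'_D(3)[OF G, of j0] j0 pivot_spec by (auto simp: pivots_def ambient_def J_def)
  moreover have "extend j0 G w = extend j0 G v"
  proof (rule nth_equalityI)
    fix j assume "j < length (extend j0 G w)"
    then have j: "j \<le> l" by simp
    show "extend j0 G w ! j = extend j0 G v ! j"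
    proof (cases "j < j0")
      case False
      then have "g \<in> G ! j" using g chain_nth_mono[OF S'_D(5)[OF G], of j0 j] j by auto
      then show ?thesis using g False line_ext_translate[OF S'_D(2)[OF G j]] by (simp add: nth_extend[OF j])
    qed (simp add: nth_extend[OF j])
  qed simp
  ultimately show "w \<in> {w \<in> pivots. extend j0 G w = extend j0 G v}" by simp
qed

end

lemma fibre_eq_extend_image:
  assumes j0: "j0 \<in> J" and G: "G \<in> S' j0"
  shows "{F \<in> S. (jump F, inter_H F) = (j0, G)} = extend j0 G ` pivots"
proof (intro set_eqI iffI)
  fix F assume "F \<in> extend j0 G ` pivots"
  then show "F \<in> {F \<in> S. (jump F, inter_H F) = (j0, G)}"
    using extend_in_S[OF j0 G] jump_extend[OF j0 G] inter_H_extend[OF j0 G] by auto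
next
  fix F assume "F \<in> {F \<in> S. (jump F, inter_H F) = (j0, G)}"
  then have F: "F \<in> S" and jF: "jump F = j0" and FG: "inter_H F = G" by auto
  note j0_spec = jump_spec[OF F, unfolded jF]
  obtain v where v: "v \<in> F ! j0" "v n = 1"
    using subspace_obtain_last_coord_one[of "F ! j0" n] S_D(2,3)[OF F] j0_spec by (auto simp: H_def)
  have "v \<in> pivots" using v S_D(3)[OF F, of j0] j0_spec by (auto simp: pivots_def)
  moreover have "F = extend j0 G v"
  proof (rule nth_equalityI)
    fix j assume "j < length F"
    then have j: "j \<le> l" using S_D(1)[OF F] by simp
    have Gj: "G ! j = F ! j \<inter> H" using FG S_D(1)[OF F] j by (auto simp: inter_H_def)
    show "F ! j = extend j0 G v ! j"
    proof (cases "j < j0")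
      case True
      then show ?thesis using j0_spec(4)[OF True] Gj nth_extend[OF j] by auto
    next
      case False
      have "v \<in> F ! j" using v chain_nth_mono[OF S_D(5)[OF F], of j0 j] False j by auto
      then show ?thesis
        using subspace_eq_line_ext[of "F ! j" n v] S_D(2,3)[OF F j] v Gj nth_extend[OF j] False
        by (simp add: H_def)
    qed
  qed (use S_D(1)[OF F] in simp)
  ultimately show "F \<in> extend j0 G ` pivots" by auto
qed

lemma card_fibre:
  assumes j0: "j0 \<in> J" and G: "G \<in> S' j0"
  shows "card {F \<in> S. (jump F, inter_H F) = (j0, G)} = CARD('a) ^ (Suc n - corner_sum M k j0)"
proof -
  have j0l: "j0 \<le> l" using j0 by (simp add: J_def)
  have "card pivots = card (extend j0 G ` pivots) * card (G ! j0)"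
  proof (rule card_eq_card_image_mult)
    show "finite pivots" using finite_subset_ambient[of pivots "Suc n"] by (auto simp: pivots_def)
    fix F assume "F \<in> extend j0 G ` pivots"
    then obtain v where v: "v \<in> pivots" "F = extend j0 G v" by auto
    have "inj_on (\<lambda>g. v + g) (G ! j0)" by (auto intro: inj_onI)
    then show "card {w \<in> pivots. extend j0 G w = F} = card (G ! j0)"
      using extend_eq_iff[OF j0 G v(1)] v(2) by (simp add: card_image)
  qed
  moreover have "corner_sum M k j0 = Suc (sum_list (take j0 (\<beta>' j0)))"
    using corner_sum_after_i0[of k j0] i0_spec j0l take_beta'[OF j0 j0l] by simp
  moreover have "corner_sum M k j0 \<le> Suc n"
    using corner_sum_after_i0[of k j0] i0_spec j0l sum_list_take_le[of j0 \<beta>] beta by simp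
  ultimately have "CARD('a) ^ (Suc n - corner_sum M k j0) * CARD('a) ^ (corner_sum M k j0 - 1)
      = card (extend j0 G ` pivots) * CARD('a) ^ (corner_sum M k j0 - 1)"
    using card_pivots S'_D(4)[OF G j0l] by (simp add: power_add[symmetric])
  then show ?thesis
    using fibre_eq_extend_image[OF j0 G] two_le_card_field[where 'a='a] by simp
qed

lemma card_S_recurrence:
  "card S = (\<Sum>j0\<in>J. card (S' j0) * CARD('a) ^ (Suc n - corner_sum M k j0))"
proof -
  have fin_S': "finite (S' j0)" for j0
    unfolding S'_def by (rule finite_subset[OF _ finite_Fl]) auto
  have fin_S: "finite S"
    unfolding S_def by (rule finite_subset[OF _ finite_Fl]) auto
  have fin: "finite J" "finite S"
    using J_subset finite_subset fin_S by auto
  have "card S = (\<Sum>y\<in>Sigma J S'. card {F \<in> S. (jump F, inter_H F) = y})"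
    using fin fin_S' jump_in_J inter_H_in_S' by (intro card_eq_sum_card_fibres) auto
  also have "\<dots> = (\<Sum>j0\<in>J. \<Sum>G\<in>S' j0. card {F \<in> S. (jump F, inter_H F) = (j0, G)})"
    using fin fin_S' by (simp add: sum.Sigma split_def prod_eq_iff)
  also have "\<dots> = (\<Sum>j0\<in>J. \<Sum>G\<in>S' j0. CARD('a) ^ (Suc n - corner_sum M k j0))"
    by (rule sum.cong[OF refl sum.cong[OF refl card_fibre]])
  also have "\<dots> = (\<Sum>j0\<in>J. card (S' j0) * CARD('a) ^ (Suc n - corner_sum M k j0))"
    by simp
  finally show ?thesis .
qed

end

lemma count_formula_zero_matrix:
  assumes "\<forall>i\<in>{1..length \<alpha>}. \<alpha> ! (i - 1) = 0" "\<forall>i\<in>{1..length \<alpha>}. \<forall>j\<in>{1..length \<beta>}. M i j = 0"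
  shows "count_formula q \<alpha> \<beta> M = 1"
proof -
  have "pos_exponent (length \<alpha>) (length \<beta>) M = 0"
    unfolding pos_exponent_def using assms(2) by (intro sum.neutral) auto
  then show ?thesis using assms by (simp add: count_formula_def qfact_def)
qed

lemma Fl_zero:
  assumes "sum_list \<beta> = 0"
  shows "Fl 0 \<beta> = {replicate (Suc (length \<beta>)) ({0} :: (nat \<Rightarrow> 'a::field) set)}"
proof -
  have "F = replicate (Suc (length \<beta>)) {0}" if "F \<in> Fl 0 \<beta>" for F :: "(nat \<Rightarrow> 'a) set list"
  proof (rule nth_equalityI)
    show "length F = length (replicate (Suc (length \<beta>)) {0})" using that by (simp add: Fl_def)
    fix j assume j: "j < length F"
    then have "F ! j \<subseteq> {0}" "0 \<in> F ! j"
      using that vs.subspace_0 by (auto simp: Fl_def ambient_0 less_Suc_eq_le)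
    then show "F ! j = replicate (Suc (length \<beta>)) {0} ! j"
      using j that by (auto simp: Fl_def simp del: replicate_Suc)
  qed
  moreover have "replicate (Suc (length \<beta>)) {0} \<in> (Fl 0 \<beta> :: (nat \<Rightarrow> 'a) set list set)"
    using assms sum_list_take_le[of _ \<beta>]
    by (auto simp: Fl_def nth_Cons' vs.subspace_def fscale_def ambient_0 dest: in_set_takeD
        simp del: replicate_Suc)
  ultimately show ?thesis by blast
qed

lemma card_Fl_rel_pos_zero:
  assumes alpha: "sum_list \<alpha> = 0" and beta: "sum_list \<beta> = 0"
    and rows: "\<forall>i\<in>{1..length \<alpha>}. (\<Sum>j\<in>{1..length \<beta>}. M i j) = \<alpha> ! (i - 1)"
  shows "real (card {F' \<in> (Fl 0 \<beta> :: (nat \<Rightarrow> 'a::{field,finite}) set list set).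
                       rel_pos (std_flag \<alpha>) F' M}) = count_formula q \<alpha> \<beta> M"
proof -
  have \<alpha>: "\<forall>i\<in>{1..length \<alpha>}. \<alpha> ! (i - 1) = 0"
    using alpha by auto
  then have M: "\<forall>i\<in>{1..length \<alpha>}. \<forall>j\<in>{1..length \<beta>}. M i j = 0"
    using rows by auto
  let ?Z = "replicate (Suc (length \<beta>)) ({0} :: (nat \<Rightarrow> 'a) set)"
  have "rel_pos (std_flag \<alpha>) ?Z M"
    using M unfolding rel_pos_def corner_sum_def
    by (auto simp: nth_std_flag ambient_def less_Suc_eq_le intro!: sum.neutral
        simp del: replicate_Suc)
  then have "{F' \<in> Fl 0 \<beta>. rel_pos (std_flag \<alpha>) F' M} = {?Z}"
    using Fl_zero[OF beta] by auto
  then show ?thesis using count_formula_zero_matrix[OF \<alpha> M] by simp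
qed

lemma card_Fl_rel_pos:
  assumes "sum_list \<alpha> = n" "sum_list \<beta> = n"
    and "\<forall>i\<in>{1..length \<alpha>}. (\<Sum>j\<in>{1..length \<beta>}. M i j) = \<alpha> ! (i - 1)"
    and "\<forall>j\<in>{1..length \<beta>}. (\<Sum>i\<in>{1..length \<alpha>}. M i j) = \<beta> ! (j - 1)"
  shows "real (card {F' \<in> (Fl n \<beta> :: (nat \<Rightarrow> 'a::{field,finite}) set list set).
                       rel_pos (std_flag \<alpha>) F' M}) = count_formula (1 / CARD('a)) \<alpha> \<beta> M"
  using assms
proof (induction n arbitrary: \<alpha> \<beta> M)
  case 0
  then show ?case by (intro card_Fl_rel_pos_zero) auto
next
  case (Suc n)
  interpret flag_count_step n \<alpha> \<beta> M "TYPE('a)"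
    by unfold_locales (use Suc.prems in auto)
  have IH: "real (card (S' j0)) = count_formula (1 / CARD('a)) \<alpha>' (\<beta>' j0) (M' j0)" if "j0 \<in> J" for j0
    unfolding S'_def using sum_alpha' sum_beta' rows' cols' that by (intro Suc.IH) auto
  have "real (card S) = (\<Sum>j0\<in>J. real (card (S' j0)) * inverse (1 / CARD('a)) ^ (Suc n - corner_sum M k j0))"
    unfolding card_S_recurrence by simp
  also have "\<dots> = count_formula (1 / CARD('a)) \<alpha> \<beta> M"
    using count_formula_recurrence[of "1 / CARD('a)"] two_le_card_field[where 'a='a] by (simp add: IH)
  finally show ?case by (simp add: S_def)
qed

theorem corollary4p29:
  fixes q :: real and n :: nat and \<alpha> \<beta> :: "nat list" and M :: "nat \<Rightarrow> nat \<Rightarrow> nat"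
  assumes field_card: "q = 1 / real (card (UNIV :: ('a::{field,finite}) set))"
    and alpha: "sum_list \<alpha> = n" and beta: "sum_list \<beta> = n"
    and rows: "\<forall>i\<in>{1..length \<alpha>}. (\<Sum>j\<in>{1..length \<beta>}. M i j) = \<alpha> ! (i - 1)"
    and cols: "\<forall>j\<in>{1..length \<beta>}. (\<Sum>i\<in>{1..length \<alpha>}. M i j) = \<beta> ! (j - 1)"
  shows "real (card {F' \<in> (Fl n \<beta> :: (nat \<Rightarrow> 'a) set list set).
                       rel_pos (std_flag \<alpha> :: (nat \<Rightarrow> 'a) set list) F' M})
       = inverse q ^ (\<Sum>(i, j, i', j') \<in> {(i, j, i', j').
              1 \<le> i' \<and> i' \<le> i \<and> i \<le> length \<alpha> \<and> 1 \<le> j \<and> j < j' \<and> j' \<le> length \<beta>}.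
                M i j * M i' j')
         * (\<Prod>i\<in>{1..length \<alpha>}. qfact q (\<alpha> ! (i - 1)))
         / (\<Prod>i\<in>{1..length \<alpha>}. \<Prod>j\<in>{1..length \<beta>}. qfact q (M i j))"
  using card_Fl_rel_pos[OF alpha beta rows cols]
  unfolding field_card count_formula_def pos_exponent_def .

end
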